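(* For each positive integer $\ell$ let $k_\ell>0$, and suppose $\lim_{\ell\to\infty}\ell e^{-\delta k_\ell}=0$ for every $\delta>0$. Let $A>0$, $B>0$, $\bar w\ge1$ be constants. Let $\{a_\ell\}$, $\{b_\ell\}$ be sequences with $b_\ell\le a_\ell$, $\lim_{\ell\to\infty}k_\ell/a_\ell=a\in[0,\infty)$ and $\lim_{\ell\to\infty}k_\ell/b_\ell=b\in(0,\infty)$, and let $\{A_\ell\}$ satisfy $\liminf_{\ell\to\infty}A_\ell=A$. Define on $[0,a_\ell]$ $$h_\ell(w)=A_\ell\log(1+Bw)-\frac{a_\ell}{k_\ell}H_2\Big(\frac w{a_\ell}\Big).$$ Let $w_\ell^*$ be a point achieving the global minimum of $h_\ell$ restricted to $[\bar w,b_\ell]$. Then for all sufficiently large $\ell$, either $w_\ell^*=\bar w$ or $w_\ell^*\in[cb_\ell,b_\ell]$, where $c=\min\Big\{\frac{bA}{64(1+Aa)},1\Big\}$.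
   Context: Logarithms are natural; $H_2(p)=-p\log p-(1-p)\log(1-p)$ for $p\in[0,1]$. *)

theory Defs
  imports "HOL-Analysis.Analysis"
begin

text \<open>Binary entropy with natural logarithms; in Isabelle ln 0 = 0, so 0 * ln 0 = 0.\<close>
definition H2 :: "real \<Rightarrow> real" where
  "H2 p = - p * ln p - (1 - p) * ln (1 - p)"

definition hfun :: "real \<Rightarrow> real \<Rightarrow> real \<Rightarrow> real \<Rightarrow> real \<Rightarrow> real" where
  "hfun Al B al kl w = Al * ln (1 + B * w) - (al / kl) * H2 (w / al)"

end

theory Submission
  imports Defs
begin

text \<open>On \<open>(0, a\<^sub>\<ell>)\<close> the second derivative of \<open>h\<^sub>\<ell>\<close> is
\<open>a\<^sub>\<ell> / (k\<^sub>\<ell> w (a\<^sub>\<ell> - w)) - A\<^sub>\<ell> B\<^sup>2 / (1 + B w)\<^sup>2\<close>,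
which is negative as soon as \<open>A\<^sub>\<ell> > A/2\<close>, \<open>k\<^sub>\<ell> > 16/(A B\<^sup>2)\<close> and \<open>w\<close> is below
\<open>a\<^sub>\<ell>/16\<close> and \<open>A k\<^sub>\<ell>/16\<close>. The constant \<open>c\<close> is chosen so that every
\<open>w \<le> c b\<^sub>\<ell>\<close> is that small for large \<open>\<ell>\<close>, so \<open>h\<^sub>\<ell>\<close> is strictly concave on
\<open>[wbar, c b\<^sub>\<ell>]\<close>. A function with negative second derivative has no minimiser
strictly inside an interval, hence the minimiser is \<open>wbar\<close> or lies in \<open>[c b\<^sub>\<ell>, b\<^sub>\<ell>]\<close>.\<close>

definition hfun_deriv :: "real \<Rightarrow> real \<Rightarrow> real \<Rightarrow> real \<Rightarrow> real \<Rightarrow> real" where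
  "hfun_deriv Al B a k w = Al * B / (1 + B * w) - (ln (1 - w / a) - ln (w / a)) / k"

definition hfun_deriv2 :: "real \<Rightarrow> real \<Rightarrow> real \<Rightarrow> real \<Rightarrow> real \<Rightarrow> real" where
  "hfun_deriv2 Al B a k w = a / (k * w * (a - w)) - Al * B^2 / (1 + B * w)^2"

lemma hfun_has_real_derivative:
  assumes "0 < w" "w < a" "B > 0" "k > 0"
  shows "(hfun Al B a k has_real_derivative hfun_deriv Al B a k w) (at w)"
proof -
  have "1 + B * w > 0" "w / a > 0" "1 - w / a > 0"
    using assms by (auto simp: field_simps add_pos_pos)
  then have "((\<lambda>w. Al * ln (1 + B * w) - (a / k) * (- (w/a) * ln (w/a) - (1 - w/a) * ln (1 - w/a)))
      has_real_derivative hfun_deriv Al B a k w) (at w)"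
    using assms by (auto intro!: derivative_eq_intros simp: hfun_deriv_def divide_simps)
  then show ?thesis
    unfolding hfun_def H2_def .
qed

lemma hfun_deriv_has_real_derivative:
  assumes "0 < w" "w < a" "B > 0" "k > 0"
  shows "(hfun_deriv Al B a k has_real_derivative hfun_deriv2 Al B a k w) (at w)"
proof -
  have "1 + B * w > 0" "w / a > 0" "1 - w / a > 0"
    using assms by (auto simp: field_simps add_pos_pos)
  then have "((\<lambda>w. Al * B / (1 + B * w) - (ln (1 - w / a) - ln (w / a)) / k)
      has_real_derivative hfun_deriv2 Al B a k w) (at w)"
    using assms by (auto intro!: derivative_eq_intros simp: hfun_deriv2_def field_simps power2_eq_square)
  then show ?thesis
    unfolding hfun_deriv_def .
qed

lemma interior_point_not_minimum_if_deriv2_neg: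
  fixes f f' f'' :: "real \<Rightarrow> real"
  assumes f': "\<And>x. x \<in> {x0..x1} \<Longrightarrow> (f has_real_derivative f' x) (at x)"
    and f'': "\<And>x. x \<in> {x0..x1} \<Longrightarrow> (f' has_real_derivative f'' x) (at x)"
    and neg: "\<And>x. x \<in> {x0..x1} \<Longrightarrow> f'' x < 0"
    and x: "x0 < x" "x < x1"
  shows "\<exists>y\<in>{x0..x1}. f y < f x"
proof (rule ccontr)
  assume "\<not> ?thesis"
  moreover have "x0 \<in> {x0..x1}" "x1 \<in> {x0..x1}"
    using x by auto
  ultimately have min: "f x \<le> f x0" "f x \<le> f x1"
    by (simp_all add: not_less)
  obtain z0 where z0: "x0 < z0" "z0 < x" "f x - f x0 = (x - x0) * f' z0"
    using MVT2[of x0 x f f'] f' x by force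
  obtain z1 where z1: "x < z1" "z1 < x1" "f x1 - f x = (x1 - x) * f' z1"
    using MVT2[of x x1 f f'] f' x by force
  have "(x - x0) * f' z0 \<le> 0" "(x1 - x) * f' z1 \<ge> 0"
    using z0 z1 min by linarith+
  then have "f' z0 \<le> 0" "f' z1 \<ge> 0"
    using x by (auto simp: mult_le_0_iff zero_le_mult_iff)
  moreover have "f' z1 < f' z0"
    by (rule DERIV_neg_imp_decreasing[of z0 z1]) (use z0 z1 f'' neg in force)+
  ultimately show False
    by linarith
qed

lemma hfun_deriv2_neg:
  fixes A Al B a k w :: real
  assumes A: "A > 0" and B: "B > 0" and w: "1 \<le> w" "16 * w < a" "16 * w < A * k"
    and Al: "A / 2 < Al" and k: "16 / (A * B^2) < k"
  shows "hfun_deriv2 Al B a k w < 0"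
proof -
  define P where "P = A * k * B^2 * w"
  have "16 < A * k * B^2"
    using k A B by (simp add: divide_less_eq mult_ac)
  then have P_gt: "16 < P"
    unfolding P_def using w by (smt (verit) mult_le_cancel_left1)
  have "16 * w * (B^2 * w) < A * k * (B^2 * w)"
    using w B by (intro mult_strict_right_mono) auto
  then have P_gt_sq: "16 * (B * w)^2 < P"
    unfolding P_def by (simp add: power2_eq_square mult_ac)
  have "(1 + B * w)^2 \<le> 2 + 2 * (B * w)^2"
    using sum_squares_ge_zero[of "1 - B * w" 0] by (simp add: power2_eq_square algebra_simps)
  also have "\<dots> < P / 4"
    using P_gt P_gt_sq by linarith
  finally have sq: "(1 + B * w)^2 < P / 4" .
  have "0 < A * k"
    using w by linarith
  then have pos: "0 < k" "0 < a - w" "0 < w" "0 < 1 + B * w"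
    using A B w by (auto simp: zero_less_mult_iff add_pos_pos)
  have "a * (1 + B * w)^2 < a * (P / 4)"
    using sq w by (intro mult_strict_left_mono) auto
  also have "\<dots> = (a / 2) * (P / 2)"
    by simp
  also have "\<dots> \<le> (a - w) * (P / 2)"
    using w P_gt by (intro mult_right_mono) auto
  also have "\<dots> = (A / 2) * ((a - w) * k * B^2 * w)"
    unfolding P_def by simp
  also have "\<dots> < Al * ((a - w) * k * B^2 * w)"
    using Al pos B by (intro mult_strict_right_mono) auto
  finally have "a * (1 + B * w)^2 < Al * B^2 * (k * w * (a - w))"
    by (simp add: mult_ac)
  then show ?thesis
    unfolding hfun_deriv2_def using pos by (simp add: divide_simps mult_ac)
qed

lemma filterlim_at_top_if_mult_exp_neg_tendsto_zero:
  fixes k :: "nat \<Rightarrow> real"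
  assumes "(\<lambda>l. real l * exp (- k l)) \<longlonglongrightarrow> 0"
  shows "filterlim k at_top sequentially"
proof (rule filterlim_at_top_dense[THEN iffD2], intro allI)
  fix Z :: real
  have "eventually (\<lambda>l. real l * exp (- k l) < 1) sequentially"
    using order_tendstoD(2)[OF assms] by simp
  moreover have "eventually (\<lambda>l. exp Z < real l) sequentially"
    using filterlim_real_sequentially filterlim_at_top_dense by blast
  ultimately show "eventually (\<lambda>l. Z < k l) sequentially"
  proof eventually_elim
    case (elim l)
    have "real l < exp (k l)"
      using elim(1) by (simp add: exp_minus field_simps)
    then have "exp Z < exp (k l)"
      using elim(2) by linarith
    then show ?case
      by simp
  qed
qed

lemma scaled_threshold_bounds:
  fixes A a0 b0 a b k :: real
  assumes A: "A > 0" and a0: "a0 \<ge> 0" and b0: "b0 > 0" and b: "0 < b" "b \<le> a"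
    and kb: "b0 / 2 < k / b" and ka: "k / a < a0 + 1 / A"
  shows "16 * (b0 * A / (64 * (1 + A * a0)) * b) < a"
    and "16 * (b0 * A / (64 * (1 + A * a0)) * b) < A * k"
proof -
  define D where "D = 1 + A * a0"
  have D: "1 \<le> D"
    unfolding D_def using A a0 by simp
  have "b0 * b < 2 * k"
    using kb b by (simp add: field_simps)
  then have bound: "16 * (b0 * A / (64 * D) * b) < A * k / (2 * D)"
    using A D by (simp add: field_simps)
  have "A * k < D * a"
    using ka b A unfolding D_def by (simp add: field_simps)
  moreover have "0 < D * a"
    using D b by simp
  ultimately have "A * k / (2 * D) < a"
    using D by (simp add: divide_less_eq mult_ac)
  then show "16 * (b0 * A / (64 * D) * b) < a"
    using bound by linarith
  have "0 < k"
    using kb b b0 by (smt (verit) zero_less_divide_iff)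
  then have "A * k / (2 * D) < A * k"
    using A D by (simp add: divide_less_eq)
  then show "16 * (b0 * A / (64 * D) * b) < A * k"
    using bound by linarith
qed

lemma hfun_minimizer_at_left_end_or_far:
  fixes A B wbar a0 b0 Al a b k ws :: real
  assumes A: "A > 0" and B: "B > 0" and wbar: "wbar \<ge> 1" and a0: "a0 \<ge> 0" and b0: "b0 > 0"
    and b: "0 < b" "b \<le> a" and Al: "A / 2 < Al"
    and kb: "b0 / 2 < k / b" and ka: "k / a < a0 + 1 / A" and k: "16 / (A * B^2) < k"
    and ws: "wbar \<le> ws" "ws \<le> b"
    and ws_min: "\<forall>w\<in>{wbar..b}. hfun Al B a k ws \<le> hfun Al B a k w"
  shows "ws = wbar \<or> min (b0 * A / (64 * (1 + A * a0))) 1 * b \<le> ws"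
proof (rule ccontr)
  define C where "C = b0 * A / (64 * (1 + A * a0))"
  define w1 where "w1 = min C 1 * b"
  assume "\<not> ?thesis"
  then have interior: "wbar < ws" "ws < w1"
    using ws unfolding C_def w1_def by auto
  have w1_le: "w1 \<le> C * b" "w1 \<le> b"
    unfolding w1_def using b by (auto intro: mult_right_mono)
  have "0 < k"
    using k A B by (smt (verit) divide_pos_pos zero_less_mult_iff zero_less_power)
  have small: "16 * x < a" "16 * x < A * k" if "x \<le> w1" for x
    using scaled_threshold_bounds[OF A a0 b0 b kb ka] that w1_le unfolding C_def by linarith+
  obtain y where y: "y \<in> {wbar..w1}" "hfun Al B a k y < hfun Al B a k ws"
  proof (rule interior_point_not_minimum_if_deriv2_neg[THEN bexE, OF _ _ _ interior])
    fix x assume x: "x \<in> {wbar..w1}"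
    then have "0 < x" "x < a"
      using wbar small[of x] by auto
    then show "(hfun Al B a k has_real_derivative hfun_deriv Al B a k x) (at x)"
      "(hfun_deriv Al B a k has_real_derivative hfun_deriv2 Al B a k x) (at x)"
      using hfun_has_real_derivative hfun_deriv_has_real_derivative B \<open>0 < k\<close> by auto
    show "hfun_deriv2 Al B a k x < 0"
      using hfun_deriv2_neg[OF A B _ small Al k] x wbar by auto
  qed
  then show False
    using ws_min[rule_format, of y] w1_le y by auto
qed

theorem lemma7:
  fixes k a b As ws :: "nat \<Rightarrow> real"
    and A B wbar a0 b0 :: real
  assumes k_pos: "\<forall>l\<ge>1. k l > 0"
    and k_growth: "\<forall>\<delta>>0. (\<lambda>l. real l * exp (- \<delta> * k l)) \<longlonglongrightarrow> 0"
    and A_pos: "A > 0" and B_pos: "B > 0" and wbar: "wbar \<ge> 1"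
    and ba: "\<forall>l\<ge>1. b l \<le> a l"
    and a_lim: "(\<lambda>l. k l / a l) \<longlonglongrightarrow> a0" and a0: "a0 \<ge> 0"
    and b_lim: "(\<lambda>l. k l / b l) \<longlonglongrightarrow> b0" and b0: "b0 > 0"
    and A_liminf: "liminf (\<lambda>l. ereal (As l)) = ereal A"
    and ws_min: "eventually (\<lambda>l. wbar \<le> ws l \<and> ws l \<le> b l \<and>
                   (\<forall>w\<in>{wbar..b l}. hfun (As l) B (a l) (k l) (ws l) \<le> hfun (As l) B (a l) (k l) w))
                 sequentially"
  shows "eventually (\<lambda>l. ws l = wbar \<or>
           (min (b0 * A / (64 * (1 + A * a0))) 1 * b l \<le> ws l \<and> ws l \<le> b l)) sequentially"
proof -
  have "eventually (\<lambda>l. k l > 0 \<and> b l \<le> a l) sequentially"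
    using k_pos ba eventually_sequentially by blast
  moreover have "eventually (\<lambda>l. b0 / 2 < k l / b l) sequentially"
    using order_tendstoD(1)[OF b_lim, of "b0 / 2"] b0 by linarith
  moreover have "eventually (\<lambda>l. k l / a l < a0 + 1 / A) sequentially"
    using order_tendstoD(2)[OF a_lim] A_pos by simp
  moreover have "eventually (\<lambda>l. A / 2 < As l) sequentially"
    using less_LiminfD[of "ereal (A / 2)" sequentially "\<lambda>l. ereal (As l)"] A_liminf A_pos by simp
  moreover have "eventually (\<lambda>l. 16 / (A * B^2) < k l) sequentially"
  proof -
    have "(\<lambda>l. real l * exp (- k l)) \<longlonglongrightarrow> 0"
      using k_growth[rule_format, of 1] by simp
    then show ?thesis
      using filterlim_at_top_if_mult_exp_neg_tendsto_zero filterlim_at_top_dense by blast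
  qed
  ultimately show ?thesis
    using ws_min
  proof eventually_elim
    case (elim l)
    then have "0 < b l"
      using b0 by (smt (verit) zero_less_divide_iff)
    with elim show ?case
      using hfun_minimizer_at_left_end_or_far[OF A_pos B_pos wbar a0 b0 \<open>0 < b l\<close>,
          where Al = "As l" and a = "a l" and k = "k l" and ws = "ws l"]
      by auto
  qed
qed

end
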